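(* In the calculus described in the context, for every well-typed expression $e:A\leadsto B$ (in which every user-defined operation carries a consistent incrementalization, and every occurrence of $+$ is at a type $A$ with $[\![A]\!]=[\![A]\!]'$ and with $\oplus$ associative and commutative on $[\![A]\!]$), the triple $(C_e,i_e,d_e)$ produced by the incrementalization transformation is a value preserving incrementalization of $[\![e]\!]$: for all $x\in[\![A]\!]$ and all finite lists $xs'$ of changes in $[\![A]\!]'$, $(\mathsf{iter}\,(C_e,i_e,d_e)\,x\,xs')_1=[\![e]\!](\mathsf{sum}\,x\,xs')$.
   Context: Fix a container: a type $S$ of shapes and for each $s:S$ an index type $\mathrm{Pos}(s)$ with decidable equality. Fix a base change structure $(\beta,\beta',\oplus,\ominus)$ with $x\oplus(y\ominus x)=y$. Object types: $A,B::=\mathsf{b}\mid F_sA\mid A\times B\mid A+B$. Value/change types with $\oplus,\ominus$: $[\![\mathsf b]\!]=\beta$, $[\![\mathsf b]\!]'=\beta'$; $[\![F_sA]\!]=\mathrm{Pos}(s)\to[\![A]\!]$, $[\![F_sA]\!]'=\mathrm{Pos}(s)\to[\![A]\!]'$ (pointwise); products componentwise; $[\![A+B]\!]=[\![A]\!]+[\![B]\!]$ ($\iota_1,\iota_2$), $[\![A+B]\!]'$ with constructors $\mathsf{cl}\,a',\mathsf{cr}\,b',\mathsf{sl}\,a,\mathsf{sr}\,b,\mathsf{null}$, where $\iota_1x\oplus\mathsf{cl}x'=\iota_1(x\oplus x')$, $\iota_1x\oplus\mathsf{cr}y'=\iota_1x$, $\iota_2y\oplus\mathsf{cl}x'=\iota_2y$,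 $\iota_2y\oplus\mathsf{cr}y'=\iota_2(y\oplus y')$, $z\oplus\mathsf{sl}x=\iota_1x$, $z\oplus\mathsf{sr}y=\iota_2y$, $z\oplus\mathsf{null}=z$; $\iota_1x\ominus\iota_1y=\mathsf{cl}(x\ominus y)$, $\iota_1x\ominus\iota_2y=\mathsf{sl}x$, $\iota_2x\ominus\iota_1y=\mathsf{sr}x$, $\iota_2x\ominus\iota_2y=\mathsf{cr}(x\ominus y)$. An incrementalization of $f:[\![A]\!]\to[\![B]\!]$ is $(C,i,d)$ with $i:[\![A]\!]\to[\![B]\!]\times C$, $d:[\![A]\!]'\to C\to[\![B]\!]'\times C$; it is consistent if $(i\,x)_1=f\,x$, $f(x\oplus x')=f\,x\oplus(d\,x'(i\,x)_2)_1$, $(i(x\oplus x'))_2=(d\,x'(i\,x)_2)_2$. A user-defined operation $o:\mathsf{Op}\,A\,B$ is a function $f_o$ with a consistent incrementalization of $f_o$. Define $\mathsf{iter}\,(C,i,d)\,x\,[\,]=i\,x$, $\mathsf{iter}\,(C,i,d)\,x\,(x'::xs')=(y\oplus y',c_2)$ where $(y,c_1)=\mathsf{iter}\,(C,i,d)\,x\,xs'$, $(y',c_2)=d\,x'\,c_1$; $\mathsf{sum}\,x\,[\,]=x$, $\mathsf{sum}\,x\,(x'::xs')=(\mathsf{sum}\,x\,xs')\oplus x'$. Expressions, typing and denotation ($i:\mathrm{Pos}(s)$; $r:\mathrm{Pos}(s_2)\to\mathrm{Pos}(s_1)$; $p:\mathrm{Pos}(s)\to\mathbb B$; $c\in[\![A]\!]$):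 $e_1;e_2$ (composition, $[\![e_2]\!]\circ[\![e_1]\!]$); $e_1\times e_2:A\times C\leadsto B\times D$ (componentwise); $\mathsf{id}$; $\mathsf{dup}:A\leadsto A\times A$, $x\mapsto(x,x)$; $\mathsf{fst},\mathsf{snd}$; $\mathsf{cst}\,c:B\leadsto A$, $x\mapsto c$; $+:A\times A\leadsto A$, $(x,y)\mapsto x\oplus y$ (only when $[\![A]\!]=[\![A]\!]'$); $\mathsf{op}\,o:A\leadsto B$ denoting $f_o$; $\mathsf{map}\,e:F_sA\leadsto F_sB$, $x\mapsto\lambda i.[\![e]\!](x\,i)$; $\mathsf{zip}:F_sA\times F_sB\leadsto F_s(A\times B)$, $(x,y)\mapsto\lambda i.(x\,i,y\,i)$; $\mathsf{get}\,i:F_sA\leadsto A$, $x\mapsto x\,i$; $\mathsf{set}\,i:A\times F_sA\leadsto F_sA$, $(x,a)\mapsto\lambda j.\,\mathsf{if}\ i=j\ \mathsf{then}\ x\ \mathsf{else}\ a\,j$; $\mathsf{reshape}\,r:F_{s_1}A\leadsto F_{s_2}A$, $x\mapsto\lambda i.x(r\,i)$; $\mathsf{replicate}\,s:A\leadsto F_sA$, $x\mapsto\lambda i.x$; $\mathsf{tp}:F_{s_1}(F_{s_2}A)\leadsto F_{s_2}(F_{s_1}A)$, $x\mapsto\lambda i\lambda j.x\,j\,i$; $\mathsf{filter}\,p:A\times F_sA\leadsto F_sA$, $(x,a)\mapsto\lambda i.\,\mathsf{if}\ p\,i\ \mathsf{then}\ a\,i\ \mathsf{else}\ x$; $\mathsf{inl},\mathsf{inr}$;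 $\mathsf{fuse}:A+A\leadsto A$, $\iota_kx\mapsto x$; $\mathsf{distr}:A\times(B+C)\leadsto A\times B+A\times C$, $(x,\iota_ky)\mapsto\iota_k(x,y)$; $e_1\|e_2:A+C\leadsto B+D$, $\iota_1x\mapsto\iota_1([\![e_1]\!]x)$, $\iota_2x\mapsto\iota_2([\![e_2]\!]x)$. Incrementalization transformation $e\mapsto(C_e,i_e,d_e)$: • $e\in\{\mathsf{id},\mathsf{dup},\mathsf{fst},\mathsf{snd},\mathsf{zip},\mathsf{tp},\mathsf{get}\,i,\mathsf{set}\,i,\mathsf{reshape}\,r,\mathsf{replicate}\,s,\mathsf{filter}\,p\}$: $C_e=\mathsf{Unit}$, $i_ex=([\![e]\!]x,\star)$, $d_ex'\star=(e\text{'s defining equation applied to the change }x',\star)$. $\mathsf{inl}/\mathsf{inr}$: $C=\mathsf{Unit}$, $i\,x=(\iota_kx,\star)$, derivatives $x'\mapsto\mathsf{cl}\,x'$, resp. $y'\mapsto\mathsf{cr}\,y'$. • $\mathsf{cst}\,c$: $C=\mathsf{Unit}$, $i\,x=(c,\star)$, $d\,x'\star=(c\ominus c,\star)$. $+$: $C=\mathsf{Unit}$, $i(x,y)=(x\oplus y,\star)$, $d(x',y')\star=(x'\oplus y',\star)$. $\mathsf{op}\,o$: the given incrementalization. • $f;g$: $C=C_f\times C_g$; $i\,x=(z,(c_1,c_2))$, $(y,c_1)=i_fx$, $(z,c_2)=i_gy$; $d\,x'(c_1,c_2)=(z',(c_1',c_2'))$, $(y',c_1')=d_fx'c_1$, $(z',c_2')=d_gy'c_2$.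 • $f\times g$: $C=C_f\times C_g$, initialization and derivative computed componentwise from those of $f$ and $g$. • $\mathsf{map}_sf$: $C=\mathrm{Pos}(s)\to C_f$, $i\,x=(\lambda j.(i_f(xj))_1,\lambda j.(i_f(xj))_2)$, $d\,x'c=(\lambda j.(d_f(x'j)(cj))_1,\lambda j.(d_f(x'j)(cj))_2)$. • $\mathsf{fuse}$: $C=[\![A]\!]+[\![A]\!]$, $i(\iota_kx)=(x,\iota_kx)$; $d(\mathsf{cl}x')(\iota_1x)=(x',\iota_1(x\oplus x'))$, $d(\mathsf{cr}y')(\iota_1x)=(x\ominus x,\iota_1x)$, $d(\mathsf{cl}x')(\iota_2y)=(y\ominus y,\iota_2y)$, $d(\mathsf{cr}y')(\iota_2y)=(y',\iota_2(y\oplus y'))$, $d(\mathsf{sl}x)(\iota_kx_0)=(x\ominus x_0,\iota_1x)$, $d(\mathsf{sr}y)(\iota_ky_0)=(y\ominus y_0,\iota_2y)$, $d\,\mathsf{null}(\iota_kx)=(x\ominus x,\iota_kx)$. • $\mathsf{distr}$: $C=[\![A]\!]\times([\![B]\!]+[\![C]\!])$, $i(x,\iota_ky)=(\iota_k(x,y),(x,\iota_ky))$; $d(x',\mathsf{cl}y')(x,\iota_1y)=(\mathsf{cl}(x',y'),(x\oplus x',\iota_1(y\oplus y')))$; $d(x',\mathsf{cr}y')(x,\iota_1y)=(\mathsf{cl}(x',y\ominus y),(x\oplus x',\iota_1y))$; $d(x',\mathsf{cl}y')(x,\iota_2y)=(\mathsf{cr}(x',y\ominus y),(x\oplus x',\iota_2y))$;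 $d(x',\mathsf{cr}y')(x,\iota_2y)=(\mathsf{cr}(x',y'),(x\oplus x',\iota_2(y\oplus y')))$; $d(x',\mathsf{sl}y)(x,\_)=(\mathsf{sl}(x\oplus x',y),(x\oplus x',\iota_1y))$; $d(x',\mathsf{sr}y)(x,\_)=(\mathsf{sr}(x\oplus x',y),(x\oplus x',\iota_2y))$; $d(x',\mathsf{null})(x,\iota_1y)=(\mathsf{cl}(x',y\ominus y),(x\oplus x',\iota_1y))$; $d(x',\mathsf{null})(x,\iota_2y)=(\mathsf{cr}(x',y\ominus y),(x\oplus x',\iota_2y))$. • $f\|g$ ($f:A_1\leadsto B_1,g:A_2\leadsto B_2$): $C=C_f\times[\![B_1]\!]+C_g\times[\![B_2]\!]$; $i(\iota_1x)=(\iota_1y,\iota_1(c,y))$ with $(y,c)=i_fx$ (analogously $\iota_2$, $g$); $d(\mathsf{cl}x')(\iota_1(c,y))=(\mathsf{cl}y',\iota_1(c',y\oplus y'))$, $(y',c')=d_fx'c$; $d(\mathsf{cr}x')(\iota_1(c,y))=(\mathsf{null},\iota_1(c,y))$; $d(\mathsf{cl}x')(\iota_2(c,y))=(\mathsf{null},\iota_2(c,y))$; $d(\mathsf{cr}x')(\iota_2(c,y))=(\mathsf{cr}y',\iota_2(c',y\oplus y'))$, $(y',c')=d_gx'c$; with $(y,c)=i_fx$: $d(\mathsf{sl}x)(\iota_1(c_0,y_0))=(\mathsf{cl}(y\ominus y_0),\iota_1(c,y))$, $d(\mathsf{sl}x)(\iota_2\_)=(\mathsf{sl}y,\iota_1(c,y))$;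 with $(y,c)=i_gx$: $d(\mathsf{sr}x)(\iota_1\_)=(\mathsf{sr}y,\iota_2(c,y))$, $d(\mathsf{sr}x)(\iota_2(c_0,y_0))=(\mathsf{cr}(y\ominus y_0),\iota_2(c,y))$; $d\,\mathsf{null}\,z=(\mathsf{null},z)$. *)

theory Defs
  imports Main
begin

text \<open>The container (shapes 's, positions Pos(s) as subsets of a type 'p) and the base
change structure (carriers beta, beta' inside a common type 'b, with oplus and ominus)
are bundled in a record.\<close>

record ('s, 'p, 'b) cstr =
  pos :: "'s \<Rightarrow> 'p set"
  bval :: "'b set"
  bchg :: "'b set"
  bpl :: "'b \<Rightarrow> 'b \<Rightarrow> 'b"
  bmi :: "'b \<Rightarrow> 'b \<Rightarrow> 'b"

definition base_change_structure :: "('s, 'p, 'b) cstr \<Rightarrow> bool" where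
  "base_change_structure K \<longleftrightarrow>
     (\<forall>x\<in>bval K. \<forall>x'\<in>bchg K. bpl K x x' \<in> bval K) \<and>
     (\<forall>x\<in>bval K. \<forall>y\<in>bval K. bmi K x y \<in> bchg K) \<and>
     (\<forall>x\<in>bval K. \<forall>y\<in>bval K. bpl K x (bmi K y x) = y)"

datatype 's ty = TB | TF 's "'s ty" | TProd "'s ty" "'s ty" | TSum "'s ty" "'s ty"

text \<open>Universal domain for values, changes and caches.\<close>
datatype ('p, 'b) val =
    VB 'b
  | VFun "'p \<Rightarrow> ('p, 'b) val"
  | VPair "('p, 'b) val" "('p, 'b) val"
  | VInl "('p, 'b) val" | VInr "('p, 'b) val"
  | VCl "('p, 'b) val" | VCr "('p, 'b) val" | VSl "('p, 'b) val" | VSr "('p, 'b) val"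
  | VNull
  | VUnit
  | VUndef

definition vfun :: "('s, 'p, 'b) cstr \<Rightarrow> 's \<Rightarrow> ('p \<Rightarrow> ('p, 'b) val) \<Rightarrow> ('p, 'b) val" where
  "vfun K s g = VFun (\<lambda>i. if i \<in> pos K s then g i else VUndef)"

primrec vals :: "('s, 'p, 'b) cstr \<Rightarrow> 's ty \<Rightarrow> ('p, 'b) val set" where
  "vals K TB = VB ` bval K"
| "vals K (TF s A) = {VFun f | f. (\<forall>i\<in>pos K s. f i \<in> vals K A) \<and> (\<forall>i. i \<notin> pos K s \<longrightarrow> f i = VUndef)}"
| "vals K (TProd A B) = {VPair x y | x y. x \<in> vals K A \<and> y \<in> vals K B}"
| "vals K (TSum A B) = VInl ` vals K A \<union> VInr ` vals K B"

primrec chgs :: "('s, 'p, 'b) cstr \<Rightarrow> 's ty \<Rightarrow> ('p, 'b) val set" where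
  "chgs K TB = VB ` bchg K"
| "chgs K (TF s A) = {VFun f | f. (\<forall>i\<in>pos K s. f i \<in> chgs K A) \<and> (\<forall>i. i \<notin> pos K s \<longrightarrow> f i = VUndef)}"
| "chgs K (TProd A B) = {VPair x y | x y. x \<in> chgs K A \<and> y \<in> chgs K B}"
| "chgs K (TSum A B) = VCl ` chgs K A \<union> VCr ` chgs K B \<union> VSl ` vals K A \<union> VSr ` vals K B \<union> {VNull}"

primrec oplus :: "('s, 'p, 'b) cstr \<Rightarrow> 's ty \<Rightarrow> ('p, 'b) val \<Rightarrow> ('p, 'b) val \<Rightarrow> ('p, 'b) val" where
  "oplus K TB v v' = (case (v, v') of (VB x, VB x') \<Rightarrow> VB (bpl K x x') | _ \<Rightarrow> VUndef)"
| "oplus K (TF s A) v v' =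
     (case (v, v') of (VFun f, VFun g) \<Rightarrow> vfun K s (\<lambda>i. oplus K A (f i) (g i)) | _ \<Rightarrow> VUndef)"
| "oplus K (TProd A B) v v' =
     (case (v, v') of (VPair x y, VPair x' y') \<Rightarrow> VPair (oplus K A x x') (oplus K B y y')
        | _ \<Rightarrow> VUndef)"
| "oplus K (TSum A B) z v' =
     (case v' of
        VCl x' \<Rightarrow> (case z of VInl x \<Rightarrow> VInl (oplus K A x x') | VInr y \<Rightarrow> VInr y | _ \<Rightarrow> VUndef)
      | VCr y' \<Rightarrow> (case z of VInl x \<Rightarrow> VInl x | VInr y \<Rightarrow> VInr (oplus K B y y') | _ \<Rightarrow> VUndef)
      | VSl x \<Rightarrow> VInl x
      | VSr y \<Rightarrow> VInr y
      | VNull \<Rightarrow> z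
      | _ \<Rightarrow> VUndef)"

primrec ominus :: "('s, 'p, 'b) cstr \<Rightarrow> 's ty \<Rightarrow> ('p, 'b) val \<Rightarrow> ('p, 'b) val \<Rightarrow> ('p, 'b) val" where
  "ominus K TB v w = (case (v, w) of (VB x, VB y) \<Rightarrow> VB (bmi K x y) | _ \<Rightarrow> VUndef)"
| "ominus K (TF s A) v w =
     (case (v, w) of (VFun f, VFun g) \<Rightarrow> vfun K s (\<lambda>i. ominus K A (f i) (g i)) | _ \<Rightarrow> VUndef)"
| "ominus K (TProd A B) v w =
     (case (v, w) of (VPair x y, VPair x' y') \<Rightarrow> VPair (ominus K A x x') (ominus K B y y')
        | _ \<Rightarrow> VUndef)"
| "ominus K (TSum A B) v w =
     (case (v, w) of
        (VInl x, VInl y) \<Rightarrow> VCl (ominus K A x y)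
      | (VInl x, VInr y) \<Rightarrow> VSl x
      | (VInr x, VInl y) \<Rightarrow> VSr x
      | (VInr x, VInr y) \<Rightarrow> VCr (ominus K B x y)
      | _ \<Rightarrow> VUndef)"

section \<open>Expressions\<close>

text \<open>Type annotations (shapes, and object types where the transformation needs
oplus/ominus at a specific type) are carried in the syntax; typing checks them.
A user-defined operation carries its function f, a cache carrier C, and i, d.\<close>
datatype ('s, 'p, 'b) expr =
    Comp "('s, 'p, 'b) expr" "('s, 'p, 'b) expr"
  | Par "('s, 'p, 'b) expr" "('s, 'p, 'b) expr"
  | Id | Dup | Fst | Snd
  | Cst "'s ty" "('p, 'b) val"
  | Plus "'s ty"
  | Op "'s ty" "'s ty" "('p, 'b) val \<Rightarrow> ('p, 'b) val" "('p, 'b) val set"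
       "('p, 'b) val \<Rightarrow> ('p, 'b) val \<times> ('p, 'b) val"
       "('p, 'b) val \<Rightarrow> ('p, 'b) val \<Rightarrow> ('p, 'b) val \<times> ('p, 'b) val"
  | Map 's "('s, 'p, 'b) expr"
  | Zip 's
  | Get 's 'p
  | Set 's 'p
  | Reshape 's 's "'p \<Rightarrow> 'p"
  | Replicate 's
  | Tp 's 's
  | Filter 's "'p \<Rightarrow> bool"
  | Inl | Inr
  | Fuse "'s ty"
  | Distr "'s ty" "'s ty" "'s ty"
  | Case "'s ty" "'s ty" "('s, 'p, 'b) expr" "('s, 'p, 'b) expr"

definition consistent_inc ::
  "('s, 'p, 'b) cstr \<Rightarrow> 's ty \<Rightarrow> 's ty \<Rightarrow> (('p, 'b) val \<Rightarrow> ('p, 'b) val) \<Rightarrow> ('p, 'b) val set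
   \<Rightarrow> (('p, 'b) val \<Rightarrow> ('p, 'b) val \<times> ('p, 'b) val)
   \<Rightarrow> (('p, 'b) val \<Rightarrow> ('p, 'b) val \<Rightarrow> ('p, 'b) val \<times> ('p, 'b) val) \<Rightarrow> bool" where
  "consistent_inc K A B f C i d \<longleftrightarrow>
     (\<forall>x\<in>vals K A. f x \<in> vals K B) \<and>
     (\<forall>x\<in>vals K A. fst (i x) \<in> vals K B \<and> snd (i x) \<in> C) \<and>
     (\<forall>x'\<in>chgs K A. \<forall>c\<in>C. fst (d x' c) \<in> chgs K B \<and> snd (d x' c) \<in> C) \<and>
     (\<forall>x\<in>vals K A. fst (i x) = f x) \<and>
     (\<forall>x\<in>vals K A. \<forall>x'\<in>chgs K A.
        f (oplus K A x x') = oplus K B (f x) (fst (d x' (snd (i x)))) \<and>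
        snd (i (oplus K A x x')) = snd (d x' (snd (i x))))"

inductive hastype :: "('s, 'p, 'b) cstr \<Rightarrow> ('s, 'p, 'b) expr \<Rightarrow> 's ty \<Rightarrow> 's ty \<Rightarrow> bool" where
  "hastype K e1 A B \<Longrightarrow> hastype K e2 B C \<Longrightarrow> hastype K (Comp e1 e2) A C"
| "hastype K e1 A B \<Longrightarrow> hastype K e2 C D \<Longrightarrow> hastype K (Par e1 e2) (TProd A C) (TProd B D)"
| "hastype K Id A A"
| "hastype K Dup A (TProd A A)"
| "hastype K Fst (TProd A B) A"
| "hastype K Snd (TProd A B) B"
| "c \<in> vals K A \<Longrightarrow> hastype K (Cst A c) B A"
| "vals K A = chgs K A \<Longrightarrow> hastype K (Plus A) (TProd A A) A"
| "consistent_inc K A B f C i d \<Longrightarrow> hastype K (Op A B f C i d) A B"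
| "hastype K e A B \<Longrightarrow> hastype K (Map s e) (TF s A) (TF s B)"
| "hastype K (Zip s) (TProd (TF s A) (TF s B)) (TF s (TProd A B))"
| "i \<in> pos K s \<Longrightarrow> hastype K (Get s i) (TF s A) A"
| "i \<in> pos K s \<Longrightarrow> hastype K (Set s i) (TProd A (TF s A)) (TF s A)"
| "(\<forall>i\<in>pos K s2. r i \<in> pos K s1) \<Longrightarrow> hastype K (Reshape s1 s2 r) (TF s1 A) (TF s2 A)"
| "hastype K (Replicate s) A (TF s A)"
| "hastype K (Tp s1 s2) (TF s1 (TF s2 A)) (TF s2 (TF s1 A))"
| "hastype K (Filter s p) (TProd A (TF s A)) (TF s A)"
| "hastype K Inl A (TSum A B)"
| "hastype K Inr B (TSum A B)"
| "hastype K (Fuse A) (TSum A A) A"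
| "hastype K (Distr A B C) (TProd A (TSum B C)) (TSum (TProd A B) (TProd A C))"
| "hastype K e1 A1 B1 \<Longrightarrow> hastype K e2 A2 B2 \<Longrightarrow>
     hastype K (Case B1 B2 e1 e2) (TSum A1 A2) (TSum B1 B2)"

primrec plus_ac :: "('s, 'p, 'b) cstr \<Rightarrow> ('s, 'p, 'b) expr \<Rightarrow> bool" where
  "plus_ac K (Comp e1 e2) = (plus_ac K e1 \<and> plus_ac K e2)"
| "plus_ac K (Par e1 e2) = (plus_ac K e1 \<and> plus_ac K e2)"
| "plus_ac K Id = True"
| "plus_ac K Dup = True"
| "plus_ac K Fst = True"
| "plus_ac K Snd = True"
| "plus_ac K (Cst A c) = True"
| "plus_ac K (Plus A) =
     ((\<forall>x\<in>vals K A. \<forall>y\<in>vals K A. \<forall>z\<in>vals K A.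
        oplus K A (oplus K A x y) z = oplus K A x (oplus K A y z)) \<and>
      (\<forall>x\<in>vals K A. \<forall>y\<in>vals K A. oplus K A x y = oplus K A y x))"
| "plus_ac K (Op A B f C i d) = True"
| "plus_ac K (Map s e) = plus_ac K e"
| "plus_ac K (Zip s) = True"
| "plus_ac K (Get s i) = True"
| "plus_ac K (Set s i) = True"
| "plus_ac K (Reshape s1 s2 r) = True"
| "plus_ac K (Replicate s) = True"
| "plus_ac K (Tp s1 s2) = True"
| "plus_ac K (Filter s p) = True"
| "plus_ac K Inl = True"
| "plus_ac K Inr = True"
| "plus_ac K (Fuse A) = True"
| "plus_ac K (Distr A B C) = True"
| "plus_ac K (Case B1 B2 e1 e2) = (plus_ac K e1 \<and> plus_ac K e2)"

section \<open>Denotation\<close>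

primrec den :: "('s, 'p, 'b) cstr \<Rightarrow> ('s, 'p, 'b) expr \<Rightarrow> ('p, 'b) val \<Rightarrow> ('p, 'b) val" where
  "den K (Comp e1 e2) = den K e2 \<circ> den K e1"
| "den K (Par e1 e2) = (\<lambda>v. case v of VPair x y \<Rightarrow> VPair (den K e1 x) (den K e2 y) | _ \<Rightarrow> VUndef)"
| "den K Id = (\<lambda>x. x)"
| "den K Dup = (\<lambda>x. VPair x x)"
| "den K Fst = (\<lambda>v. case v of VPair x y \<Rightarrow> x | _ \<Rightarrow> VUndef)"
| "den K Snd = (\<lambda>v. case v of VPair x y \<Rightarrow> y | _ \<Rightarrow> VUndef)"
| "den K (Cst A c) = (\<lambda>x. c)"
| "den K (Plus A) = (\<lambda>v. case v of VPair x y \<Rightarrow> oplus K A x y | _ \<Rightarrow> VUndef)"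
| "den K (Op A B f C i d) = f"
| "den K (Map s e) = (\<lambda>v. case v of VFun x \<Rightarrow> vfun K s (\<lambda>i. den K e (x i)) | _ \<Rightarrow> VUndef)"
| "den K (Zip s) = (\<lambda>v. case v of VPair (VFun x) (VFun y) \<Rightarrow> vfun K s (\<lambda>i. VPair (x i) (y i))
                                 | _ \<Rightarrow> VUndef)"
| "den K (Get s i) = (\<lambda>v. case v of VFun x \<Rightarrow> x i | _ \<Rightarrow> VUndef)"
| "den K (Set s i) = (\<lambda>v. case v of VPair x (VFun a) \<Rightarrow> vfun K s (\<lambda>j. if i = j then x else a j)
                                 | _ \<Rightarrow> VUndef)"
| "den K (Reshape s1 s2 r) = (\<lambda>v. case v of VFun x \<Rightarrow> vfun K s2 (\<lambda>i. x (r i)) | _ \<Rightarrow> VUndef)"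
| "den K (Replicate s) = (\<lambda>x. vfun K s (\<lambda>i. x))"
| "den K (Tp s1 s2) = (\<lambda>v. case v of VFun x \<Rightarrow>
       vfun K s2 (\<lambda>i. vfun K s1 (\<lambda>j. case x j of VFun y \<Rightarrow> y i | _ \<Rightarrow> VUndef)) | _ \<Rightarrow> VUndef)"
| "den K (Filter s p) = (\<lambda>v. case v of VPair x (VFun a) \<Rightarrow> vfun K s (\<lambda>i. if p i then a i else x)
                                 | _ \<Rightarrow> VUndef)"
| "den K Inl = VInl"
| "den K Inr = VInr"
| "den K (Fuse A) = (\<lambda>v. case v of VInl x \<Rightarrow> x | VInr x \<Rightarrow> x | _ \<Rightarrow> VUndef)"
| "den K (Distr A B C) = (\<lambda>v. case v of VPair x (VInl y) \<Rightarrow> VInl (VPair x y)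
                                 | VPair x (VInr y) \<Rightarrow> VInr (VPair x y) | _ \<Rightarrow> VUndef)"
| "den K (Case B1 B2 e1 e2) = (\<lambda>v. case v of VInl x \<Rightarrow> VInl (den K e1 x)
                                 | VInr x \<Rightarrow> VInr (den K e2 x) | _ \<Rightarrow> VUndef)"

section \<open>Incrementalization transformation\<close>

type_synonym ('p, 'b) inc =
  "(('p, 'b) val \<Rightarrow> ('p, 'b) val \<times> ('p, 'b) val)
   \<times> (('p, 'b) val \<Rightarrow> ('p, 'b) val \<Rightarrow> ('p, 'b) val \<times> ('p, 'b) val)"

text \<open>Primitives with cache type Unit: derivative = defining equation applied to the change.\<close>
definition unit_inc :: "(('p, 'b) val \<Rightarrow> ('p, 'b) val) \<Rightarrow> ('p, 'b) inc" where
  "unit_inc f = ((\<lambda>x. (f x, VUnit)), (\<lambda>x' c. (f x', VUnit)))"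

definition comp_inc :: "('p, 'b) inc \<Rightarrow> ('p, 'b) inc \<Rightarrow> ('p, 'b) inc" where
  "comp_inc F G =
    ((\<lambda>x. let (y, c1) = fst F x; (z, c2) = fst G y in (z, VPair c1 c2)),
     (\<lambda>x' c. case c of VPair c1 c2 \<Rightarrow>
         (let (y', c1') = snd F x' c1; (z', c2') = snd G y' c2 in (z', VPair c1' c2'))
       | _ \<Rightarrow> (VUndef, VUndef)))"

definition par_inc :: "('p, 'b) inc \<Rightarrow> ('p, 'b) inc \<Rightarrow> ('p, 'b) inc" where
  "par_inc F G =
    ((\<lambda>v. case v of VPair x y \<Rightarrow>
         (let (u, c1) = fst F x; (w, c2) = fst G y in (VPair u w, VPair c1 c2))
       | _ \<Rightarrow> (VUndef, VUndef)),
     (\<lambda>v c. case (v, c) of (VPair x' y', VPair c1 c2) \<Rightarrow>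
         (let (u', c1') = snd F x' c1; (w', c2') = snd G y' c2 in (VPair u' w', VPair c1' c2'))
       | _ \<Rightarrow> (VUndef, VUndef)))"

definition map_inc :: "('s, 'p, 'b) cstr \<Rightarrow> 's \<Rightarrow> ('p, 'b) inc \<Rightarrow> ('p, 'b) inc" where
  "map_inc K s F =
    ((\<lambda>v. case v of VFun x \<Rightarrow>
         (vfun K s (\<lambda>j. fst (fst F (x j))), vfun K s (\<lambda>j. snd (fst F (x j))))
       | _ \<Rightarrow> (VUndef, VUndef)),
     (\<lambda>v c. case (v, c) of (VFun x', VFun cs) \<Rightarrow>
         (vfun K s (\<lambda>j. fst (snd F (x' j) (cs j))), vfun K s (\<lambda>j. snd (snd F (x' j) (cs j))))
       | _ \<Rightarrow> (VUndef, VUndef)))"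

definition fuse_d :: "('s, 'p, 'b) cstr \<Rightarrow> 's ty \<Rightarrow> ('p, 'b) val \<Rightarrow> ('p, 'b) val \<Rightarrow> ('p, 'b) val \<times> ('p, 'b) val" where
  "fuse_d K A v c =
     (case v of
        VCl x' \<Rightarrow> (case c of VInl x \<Rightarrow> (x', VInl (oplus K A x x'))
                           | VInr y \<Rightarrow> (ominus K A y y, VInr y) | _ \<Rightarrow> (VUndef, VUndef))
      | VCr y' \<Rightarrow> (case c of VInl x \<Rightarrow> (ominus K A x x, VInl x)
                           | VInr y \<Rightarrow> (y', VInr (oplus K A y y')) | _ \<Rightarrow> (VUndef, VUndef))
      | VSl x \<Rightarrow> (case c of VInl x0 \<Rightarrow> (ominus K A x x0, VInl x)
                          | VInr x0 \<Rightarrow> (ominus K A x x0, VInl x) | _ \<Rightarrow> (VUndef, VUndef))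
      | VSr y \<Rightarrow> (case c of VInl y0 \<Rightarrow> (ominus K A y y0, VInr y)
                          | VInr y0 \<Rightarrow> (ominus K A y y0, VInr y) | _ \<Rightarrow> (VUndef, VUndef))
      | VNull \<Rightarrow> (case c of VInl x \<Rightarrow> (ominus K A x x, VInl x)
                          | VInr x \<Rightarrow> (ominus K A x x, VInr x) | _ \<Rightarrow> (VUndef, VUndef))
      | _ \<Rightarrow> (VUndef, VUndef))"

definition fuse_inc :: "('s, 'p, 'b) cstr \<Rightarrow> 's ty \<Rightarrow> ('p, 'b) inc" where
  "fuse_inc K A =
    ((\<lambda>v. case v of VInl x \<Rightarrow> (x, VInl x) | VInr x \<Rightarrow> (x, VInr x) | _ \<Rightarrow> (VUndef, VUndef)),
     fuse_d K A)"

definition distr_d :: "('s, 'p, 'b) cstr \<Rightarrow> 's ty \<Rightarrow> 's ty \<Rightarrow> 's ty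
    \<Rightarrow> ('p, 'b) val \<Rightarrow> ('p, 'b) val \<Rightarrow> ('p, 'b) val \<times> ('p, 'b) val" where
  "distr_d K A B C v c =
     (case (v, c) of
        (VPair x' w', VPair x z) \<Rightarrow>
          (case w' of
             VCl y' \<Rightarrow> (case z of
                 VInl y \<Rightarrow> (VCl (VPair x' y'), VPair (oplus K A x x') (VInl (oplus K B y y')))
               | VInr y \<Rightarrow> (VCr (VPair x' (ominus K C y y)), VPair (oplus K A x x') (VInr y))
               | _ \<Rightarrow> (VUndef, VUndef))
           | VCr y' \<Rightarrow> (case z of
                 VInl y \<Rightarrow> (VCl (VPair x' (ominus K B y y)), VPair (oplus K A x x') (VInl y))
               | VInr y \<Rightarrow> (VCr (VPair x' y'), VPair (oplus K A x x') (VInr (oplus K C y y')))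
               | _ \<Rightarrow> (VUndef, VUndef))
           | VSl y \<Rightarrow> (VSl (VPair (oplus K A x x') y), VPair (oplus K A x x') (VInl y))
           | VSr y \<Rightarrow> (VSr (VPair (oplus K A x x') y), VPair (oplus K A x x') (VInr y))
           | VNull \<Rightarrow> (case z of
                 VInl y \<Rightarrow> (VCl (VPair x' (ominus K B y y)), VPair (oplus K A x x') (VInl y))
               | VInr y \<Rightarrow> (VCr (VPair x' (ominus K C y y)), VPair (oplus K A x x') (VInr y))
               | _ \<Rightarrow> (VUndef, VUndef))
           | _ \<Rightarrow> (VUndef, VUndef))
      | _ \<Rightarrow> (VUndef, VUndef))"

definition distr_inc :: "('s, 'p, 'b) cstr \<Rightarrow> 's ty \<Rightarrow> 's ty \<Rightarrow> 's ty \<Rightarrow> ('p, 'b) inc" where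
  "distr_inc K A B C =
    ((\<lambda>v. case v of VPair x (VInl y) \<Rightarrow> (VInl (VPair x y), VPair x (VInl y))
                  | VPair x (VInr y) \<Rightarrow> (VInr (VPair x y), VPair x (VInr y))
                  | _ \<Rightarrow> (VUndef, VUndef)),
     distr_d K A B C)"

definition case_d :: "('s, 'p, 'b) cstr \<Rightarrow> 's ty \<Rightarrow> 's ty \<Rightarrow> ('p, 'b) inc \<Rightarrow> ('p, 'b) inc
    \<Rightarrow> ('p, 'b) val \<Rightarrow> ('p, 'b) val \<Rightarrow> ('p, 'b) val \<times> ('p, 'b) val" where
  "case_d K B1 B2 F G v z =
     (case v of
        VCl x' \<Rightarrow> (case z of
            VInl (VPair c y) \<Rightarrow> (let (y', c') = snd F x' c in (VCl y', VInl (VPair c' (oplus K B1 y y'))))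
          | VInr (VPair c y) \<Rightarrow> (VNull, VInr (VPair c y))
          | _ \<Rightarrow> (VUndef, VUndef))
      | VCr x' \<Rightarrow> (case z of
            VInl (VPair c y) \<Rightarrow> (VNull, VInl (VPair c y))
          | VInr (VPair c y) \<Rightarrow> (let (y', c') = snd G x' c in (VCr y', VInr (VPair c' (oplus K B2 y y'))))
          | _ \<Rightarrow> (VUndef, VUndef))
      | VSl x \<Rightarrow> (let (y, c) = fst F x in
          (case z of
             VInl (VPair c0 y0) \<Rightarrow> (VCl (ominus K B1 y y0), VInl (VPair c y))
           | VInr _ \<Rightarrow> (VSl y, VInl (VPair c y))
           | _ \<Rightarrow> (VUndef, VUndef)))
      | VSr x \<Rightarrow> (let (y, c) = fst G x in
          (case z of
             VInl _ \<Rightarrow> (VSr y, VInr (VPair c y))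
           | VInr (VPair c0 y0) \<Rightarrow> (VCr (ominus K B2 y y0), VInr (VPair c y))
           | _ \<Rightarrow> (VUndef, VUndef)))
      | VNull \<Rightarrow> (VNull, z)
      | _ \<Rightarrow> (VUndef, VUndef))"

definition case_inc :: "('s, 'p, 'b) cstr \<Rightarrow> 's ty \<Rightarrow> 's ty \<Rightarrow> ('p, 'b) inc \<Rightarrow> ('p, 'b) inc
    \<Rightarrow> ('p, 'b) inc" where
  "case_inc K B1 B2 F G =
    ((\<lambda>v. case v of VInl x \<Rightarrow> (let (y, c) = fst F x in (VInl y, VInl (VPair c y)))
                  | VInr x \<Rightarrow> (let (y, c) = fst G x in (VInr y, VInr (VPair c y)))
                  | _ \<Rightarrow> (VUndef, VUndef)),
     case_d K B1 B2 F G)"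

primrec inc :: "('s, 'p, 'b) cstr \<Rightarrow> ('s, 'p, 'b) expr \<Rightarrow> ('p, 'b) inc" where
  "inc K (Comp e1 e2) = comp_inc (inc K e1) (inc K e2)"
| "inc K (Par e1 e2) = par_inc (inc K e1) (inc K e2)"
| "inc K Id = unit_inc (den K Id)"
| "inc K Dup = unit_inc (den K Dup)"
| "inc K Fst = unit_inc (den K Fst)"
| "inc K Snd = unit_inc (den K Snd)"
| "inc K (Cst A c) = ((\<lambda>x. (c, VUnit)), (\<lambda>x' u. (ominus K A c c, VUnit)))"
| "inc K (Plus A) =
     ((\<lambda>v. case v of VPair x y \<Rightarrow> (oplus K A x y, VUnit) | _ \<Rightarrow> (VUndef, VUndef)),
      (\<lambda>v u. case v of VPair x' y' \<Rightarrow> (oplus K A x' y', VUnit) | _ \<Rightarrow> (VUndef, VUndef)))"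
| "inc K (Op A B f C i d) = (i, d)"
| "inc K (Map s e) = map_inc K s (inc K e)"
| "inc K (Zip s) = unit_inc (den K (Zip s))"
| "inc K (Get s i) = unit_inc (den K (Get s i))"
| "inc K (Set s i) = unit_inc (den K (Set s i))"
| "inc K (Reshape s1 s2 r) = unit_inc (den K (Reshape s1 s2 r))"
| "inc K (Replicate s) = unit_inc (den K (Replicate s))"
| "inc K (Tp s1 s2) = unit_inc (den K (Tp s1 s2))"
| "inc K (Filter s p) = unit_inc (den K (Filter s p))"
| "inc K Inl = ((\<lambda>x. (VInl x, VUnit)), (\<lambda>x' u. (VCl x', VUnit)))"
| "inc K Inr = ((\<lambda>x. (VInr x, VUnit)), (\<lambda>y' u. (VCr y', VUnit)))"
| "inc K (Fuse A) = fuse_inc K A"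
| "inc K (Distr A B C) = distr_inc K A B C"
| "inc K (Case B1 B2 e1 e2) = case_inc K B1 B2 (inc K e1) (inc K e2)"

text \<open>iter at output type B (needed for oplus at B).\<close>
fun iter :: "('s, 'p, 'b) cstr \<Rightarrow> 's ty \<Rightarrow> ('p, 'b) inc \<Rightarrow> ('p, 'b) val \<Rightarrow> ('p, 'b) val list
    \<Rightarrow> ('p, 'b) val \<times> ('p, 'b) val" where
  "iter K B F x [] = fst F x"
| "iter K B F x (x' # xs') =
     (let (y, c1) = iter K B F x xs'; (y', c2) = snd F x' c1 in (oplus K B y y', c2))"

fun sum_chg :: "('s, 'p, 'b) cstr \<Rightarrow> 's ty \<Rightarrow> ('p, 'b) val \<Rightarrow> ('p, 'b) val list \<Rightarrow> ('p, 'b) val" where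
  "sum_chg K A x [] = x"
| "sum_chg K A x (x' # xs') = oplus K A (sum_chg K A x xs') x'"

end

theory Submission
  imports Defs
begin

(* Value preservation is proved through a stronger, compositional property: an
   incrementalization (i, d) of f is valid for a relation R between inputs and caches if
   initialization establishes R and every derivative step, taken from a cache related to the
   current input, yields a correct output change for f and a cache related to the updated
   input. The caches built by the transformation satisfy such an invariant: a user operation
   keeps exactly the cache its initialization would produce, Fuse and Distr keep the input
   itself, Case keeps the active branch with that branch's cache and output, and the cache-free
   primitives are additive. Validity is preserved by composition, pairing, map and case, so it
   holds for every well-typed expression; induction over the list of changes then gives the
   theorem. *)

lemma vfun_eq_VFun: "(\<forall>i. i \<notin> pos K s \<longrightarrow> f i = VUndef) \<Longrightarrow> vfun K s f = VFun f"
  unfolding vfun_def by (rule arg_cong[where f=VFun]) auto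

lemma vfun_in_vals_TF [simp]: "vfun K s g \<in> vals K (TF s A) \<longleftrightarrow> (\<forall>i\<in>pos K s. g i \<in> vals K A)"
  unfolding vfun_def by auto

lemma vfun_in_chgs_TF [simp]: "vfun K s g \<in> chgs K (TF s A) \<longleftrightarrow> (\<forall>i\<in>pos K s. g i \<in> chgs K A)"
  unfolding vfun_def by auto

lemma oplus_TF_vfun [simp]:
  "oplus K (TF s A) (vfun K s f) (vfun K s g) = vfun K s (\<lambda>i. oplus K A (f i) (g i))"
  by (simp add: vfun_def) (rule ext; auto)

lemma ominus_TF_vfun [simp]:
  "ominus K (TF s A) (vfun K s f) (vfun K s g) = vfun K s (\<lambda>i. ominus K A (f i) (g i))"
  by (simp add: vfun_def) (rule ext; auto)

lemma vfun_cong: "(\<And>i. i \<in> pos K s \<Longrightarrow> f i = g i) \<Longrightarrow> vfun K s f = vfun K s g"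
  unfolding vfun_def by (rule arg_cong[where f=VFun]) auto

lemma vals_TF_E:
  assumes "x \<in> vals K (TF s A)"
  obtains f where "x = vfun K s f" and "\<forall>i\<in>pos K s. f i \<in> vals K A"
  using assms by simp (metis vfun_eq_VFun)

lemma chgs_TF_E:
  assumes "x \<in> chgs K (TF s A)"
  obtains f where "x = vfun K s f" and "\<forall>i\<in>pos K s. f i \<in> chgs K A"
  using assms by simp (metis vfun_eq_VFun)

context
  fixes K :: "('s, 'p, 'b) cstr"
  assumes bcs: "base_change_structure K"
begin

lemma oplus_closed: "x \<in> vals K A \<Longrightarrow> x' \<in> chgs K A \<Longrightarrow> oplus K A x x' \<in> vals K A"
proof (induction A arbitrary: x x')
  case TB then show ?case using bcs by (auto simp: base_change_structure_def)
next
  case (TF s A) then show ?case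
    by (elim vals_TF_E chgs_TF_E) (simp del: oplus.simps vals.simps chgs.simps)
qed auto

lemma ominus_closed: "x \<in> vals K A \<Longrightarrow> y \<in> vals K A \<Longrightarrow> ominus K A x y \<in> chgs K A"
proof (induction A arbitrary: x y)
  case TB then show ?case using bcs by (auto simp: base_change_structure_def)
next
  case (TF s A) then show ?case
    by (elim vals_TF_E) (simp del: ominus.simps vals.simps chgs.simps)
qed auto

lemma oplus_ominus: "x \<in> vals K A \<Longrightarrow> y \<in> vals K A \<Longrightarrow> oplus K A y (ominus K A x y) = x"
proof (induction A arbitrary: x y)
  case TB then show ?case using bcs by (auto simp: base_change_structure_def)
next
  case (TF s A) then show ?case
    by (elim vals_TF_E)
      (simp del: oplus.simps ominus.simps vals.simps chgs.simps, rule vfun_cong, simp)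
qed auto

end

definition valid_inc ::
  "('s, 'p, 'b) cstr \<Rightarrow> 's ty \<Rightarrow> 's ty \<Rightarrow> (('p, 'b) val \<Rightarrow> ('p, 'b) val)
   \<Rightarrow> (('p, 'b) val \<Rightarrow> ('p, 'b) val \<Rightarrow> bool) \<Rightarrow> ('p, 'b) inc \<Rightarrow> bool" where
  "valid_inc K A B f R F \<longleftrightarrow>
     (\<forall>x\<in>vals K A. f x \<in> vals K B) \<and>
     (\<forall>x\<in>vals K A. \<forall>y c. fst F x = (y, c) \<longrightarrow> y = f x \<and> R x c) \<and>
     (\<forall>x\<in>vals K A. \<forall>x'\<in>chgs K A. \<forall>c y' c'. R x c \<longrightarrow> snd F x' c = (y', c') \<longrightarrow>
        y' \<in> chgs K B \<and> f (oplus K A x x') = oplus K B (f x) y' \<and> R (oplus K A x x') c')"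

lemma valid_incI:
  assumes "\<And>x. x \<in> vals K A \<Longrightarrow> f x \<in> vals K B"
    and "\<And>x y c. x \<in> vals K A \<Longrightarrow> fst F x = (y, c) \<Longrightarrow> y = f x \<and> R x c"
    and "\<And>x x' c y' c'. x \<in> vals K A \<Longrightarrow> x' \<in> chgs K A \<Longrightarrow> R x c \<Longrightarrow> snd F x' c = (y', c') \<Longrightarrow>
      y' \<in> chgs K B \<and> f (oplus K A x x') = oplus K B (f x) y' \<and> R (oplus K A x x') c'"
  shows "valid_inc K A B f R F"
  using assms unfolding valid_inc_def by blast

lemma valid_incD:
  assumes "valid_inc K A B f R F" and "x \<in> vals K A"
  shows valid_inc_vals: "f x \<in> vals K B"
    and valid_inc_init: "fst F x = (y, c) \<Longrightarrow> y = f x \<and> R x c"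
    and valid_inc_step: "x' \<in> chgs K A \<Longrightarrow> R x c \<Longrightarrow> snd F x' c = (y', c') \<Longrightarrow>
      y' \<in> chgs K B \<and> f (oplus K A x x') = oplus K B (f x) y' \<and> R (oplus K A x x') c'"
  using assms unfolding valid_inc_def by blast+

lemma valid_inc_init_sel:
  "valid_inc K A B f R F \<Longrightarrow> x \<in> vals K A \<Longrightarrow> fst (fst F x) = f x \<and> R x (snd (fst F x))"
  by (metis valid_inc_init prod.collapse)

lemma valid_inc_step_sel:
  "valid_inc K A B f R F \<Longrightarrow> x \<in> vals K A \<Longrightarrow> x' \<in> chgs K A \<Longrightarrow> R x c \<Longrightarrow>
    fst (snd F x' c) \<in> chgs K B \<and> f (oplus K A x x') = oplus K B (f x) (fst (snd F x' c))
    \<and> R (oplus K A x x') (snd (snd F x' c))"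
  by (metis valid_inc_step prod.collapse)

lemma iter_valid_inc:
  assumes bcs: "base_change_structure K" and F: "valid_inc K A B f R F"
    and x: "x \<in> vals K A" and xs': "set xs' \<subseteq> chgs K A"
  shows "fst (iter K B F x xs') = f (sum_chg K A x xs')"
proof -
  let ?s = "sum_chg K A x"
  have "?s xs' \<in> vals K A \<and> fst (iter K B F x xs') = f (?s xs')
    \<and> R (?s xs') (snd (iter K B F x xs'))"
    using xs'
  proof (induction xs')
    case Nil
    show ?case using x valid_inc_init_sel[OF F x] by simp
  next
    case (Cons x' xs')
    then have IH: "?s xs' \<in> vals K A" "fst (iter K B F x xs') = f (?s xs')"
      "R (?s xs') (snd (iter K B F x xs'))" and x': "x' \<in> chgs K A"
      by auto
    show ?case
      using valid_inc_step_sel[OF F IH(1) x' IH(3)] oplus_closed[OF bcs IH(1) x'] IH(2)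
      by (simp add: split_def Let_def)
  qed
  then show ?thesis by simp
qed

definition comp_rel ::
  "(('p, 'b) val \<Rightarrow> ('p, 'b) val) \<Rightarrow> (('p, 'b) val \<Rightarrow> ('p, 'b) val \<Rightarrow> bool)
   \<Rightarrow> (('p, 'b) val \<Rightarrow> ('p, 'b) val \<Rightarrow> bool) \<Rightarrow> ('p, 'b) val \<Rightarrow> ('p, 'b) val \<Rightarrow> bool" where
  "comp_rel f R S x c \<longleftrightarrow> (case c of VPair c1 c2 \<Rightarrow> R x c1 \<and> S (f x) c2 | _ \<Rightarrow> False)"

lemma valid_comp_inc:
  assumes F: "valid_inc K A B f R F" and G: "valid_inc K B C g S G"
  shows "valid_inc K A C (\<lambda>x. g (f x)) (comp_rel f R S) (comp_inc F G)"
proof (rule valid_incI, goal_cases vals init step)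
  case (vals x)
  then show ?case using F G by (simp add: valid_inc_vals)
next
  case (init x z c)
  obtain y c1 where 1: "fst F x = (y, c1)" by fastforce
  note y = valid_inc_init[OF F init(1) 1]
  obtain c2 where 2: "fst G y = (z, c2)" "c = VPair c1 c2"
    using init(2) 1 by (auto simp: comp_inc_def split: prod.splits)
  show ?case
    using valid_inc_init[OF G valid_inc_vals[OF F init(1)] 2(1)[unfolded y[THEN conjunct1]]] y 2
    by (simp add: comp_rel_def)
next
  case (step x x' c z' c')
  obtain c1 c2 where c: "c = VPair c1 c2" "R x c1" "S (f x) c2"
    using step(3) by (auto simp: comp_rel_def split: val.splits)
  obtain y' c1' where 1: "snd F x' c1 = (y', c1')" by fastforce
  note y' = valid_inc_step[OF F step(1,2) c(2) 1]
  obtain c2' where 2: "snd G y' c2 = (z', c2')" "c' = VPair c1' c2'"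
    using step(4) c 1 by (auto simp: comp_inc_def split: prod.splits)
  show ?case
    using y' valid_inc_step[OF G valid_inc_vals[OF F step(1)] conjunct1[OF y'] c(3) 2(1)] 2(2)
    by (simp add: comp_rel_def)
qed

definition par_rel ::
  "(('p, 'b) val \<Rightarrow> ('p, 'b) val \<Rightarrow> bool) \<Rightarrow> (('p, 'b) val \<Rightarrow> ('p, 'b) val \<Rightarrow> bool)
   \<Rightarrow> ('p, 'b) val \<Rightarrow> ('p, 'b) val \<Rightarrow> bool" where
  "par_rel R S v c \<longleftrightarrow>
     (case (v, c) of (VPair x y, VPair c1 c2) \<Rightarrow> R x c1 \<and> S y c2 | _ \<Rightarrow> False)"

lemma valid_par_inc:
  assumes F: "valid_inc K A B f R F" and G: "valid_inc K C D g S G"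
  shows "valid_inc K (TProd A C) (TProd B D)
    (\<lambda>v. case v of VPair x y \<Rightarrow> VPair (f x) (g y) | _ \<Rightarrow> VUndef) (par_rel R S) (par_inc F G)"
proof (rule valid_incI, goal_cases vals init step)
  case (vals v)
  then show ?case using F G by (auto simp: valid_inc_vals)
next
  case (init v w c)
  obtain x y where v: "v = VPair x y" "x \<in> vals K A" "y \<in> vals K C" using init(1) by auto
  obtain u1 c1 where 1: "fst F x = (u1, c1)" by fastforce
  obtain u2 c2 where 2: "fst G y = (u2, c2)" by fastforce
  have "w = VPair u1 u2" "c = VPair c1 c2" using init(2) v 1 2 by (auto simp: par_inc_def)
  then show ?case
    using valid_inc_init[OF F v(2) 1] valid_inc_init[OF G v(3) 2] v by (simp add: par_rel_def)
next
  case (step v v' c w' c')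
  obtain x y x' y' where xy: "v = VPair x y" "x \<in> vals K A" "y \<in> vals K C"
    and xy': "v' = VPair x' y'" "x' \<in> chgs K A" "y' \<in> chgs K C" using step(1,2) by auto
  obtain c1 c2 where c: "c = VPair c1 c2" "R x c1" "S y c2"
    using step(3) xy by (auto simp: par_rel_def split: val.splits)
  obtain u1 d1 where 1: "snd F x' c1 = (u1, d1)" by fastforce
  obtain u2 d2 where 2: "snd G y' c2 = (u2, d2)" by fastforce
  have "w' = VPair u1 u2" "c' = VPair d1 d2" using step(4) xy' c 1 2 by (auto simp: par_inc_def)
  then show ?case
    using valid_inc_step[OF F xy(2) xy'(2) c(2) 1] valid_inc_step[OF G xy(3) xy'(3) c(3) 2] xy xy'
    by (simp add: par_rel_def)
qed

definition map_rel ::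
  "('s, 'p, 'b) cstr \<Rightarrow> 's \<Rightarrow> (('p, 'b) val \<Rightarrow> ('p, 'b) val \<Rightarrow> bool)
   \<Rightarrow> ('p, 'b) val \<Rightarrow> ('p, 'b) val \<Rightarrow> bool" where
  "map_rel K s R v c \<longleftrightarrow>
     (case (v, c) of (VFun x, VFun cs) \<Rightarrow> \<forall>j\<in>pos K s. R (x j) (cs j) | _ \<Rightarrow> False)"

lemma map_vfun:
  "(case vfun K s g of VFun x \<Rightarrow> vfun K s (\<lambda>i. f (x i)) | _ \<Rightarrow> VUndef) = vfun K s (\<lambda>i. f (g i))"
  by (simp add: vfun_def) (rule ext, auto)

lemma fst_map_inc_vfun:
  "fst (map_inc K s F) (vfun K s g) =
    (vfun K s (\<lambda>j. fst (fst F (g j))), vfun K s (\<lambda>j. snd (fst F (g j))))"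
  by (simp add: map_inc_def vfun_def) (intro conjI ext, auto)

lemma snd_map_inc_vfun:
  "snd (map_inc K s F) (vfun K s g) (VFun cs) =
    (vfun K s (\<lambda>j. fst (snd F (g j) (cs j))), vfun K s (\<lambda>j. snd (snd F (g j) (cs j))))"
  by (simp add: map_inc_def vfun_def) (intro conjI ext, auto)

lemma map_rel_vfun:
  "map_rel K s R (vfun K s g) c \<longleftrightarrow> (\<exists>cs. c = VFun cs \<and> (\<forall>j\<in>pos K s. R (g j) (cs j)))"
  by (auto simp: map_rel_def vfun_def split: val.splits)

lemma map_rel_vfun_vfun:
  "map_rel K s R (vfun K s g) (vfun K s h) \<longleftrightarrow> (\<forall>j\<in>pos K s. R (g j) (h j))"
  by (auto simp: map_rel_def vfun_def)

lemma valid_map_inc: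
  assumes F: "valid_inc K A B f R F"
  shows "valid_inc K (TF s A) (TF s B)
    (\<lambda>v. case v of VFun x \<Rightarrow> vfun K s (\<lambda>i. f (x i)) | _ \<Rightarrow> VUndef) (map_rel K s R) (map_inc K s F)"
proof (rule valid_incI, goal_cases vals init step)
  case (vals v)
  then obtain g where "v = vfun K s g" "\<forall>i\<in>pos K s. g i \<in> vals K A" by (rule vals_TF_E)
  then show ?case using valid_inc_vals[OF F] by (simp add: map_vfun del: vals.simps)
next
  case (init v w c)
  obtain g where v: "v = vfun K s g" and g: "\<forall>i\<in>pos K s. g i \<in> vals K A"
    using init(1) by (rule vals_TF_E)
  have "w = vfun K s (\<lambda>j. fst (fst F (g j)))" "c = vfun K s (\<lambda>j. snd (fst F (g j)))"
    using init(2) by (simp_all add: v fst_map_inc_vfun)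
  then show ?case
    using g valid_inc_init_sel[OF F]
    by (auto simp: v map_vfun map_rel_vfun_vfun simp del: vals.simps intro: vfun_cong)
next
  case (step v v' c w' c')
  obtain g where g: "v = vfun K s g" "\<forall>i\<in>pos K s. g i \<in> vals K A"
    using step(1) by (rule vals_TF_E)
  obtain g' where g': "v' = vfun K s g'" "\<forall>i\<in>pos K s. g' i \<in> chgs K A"
    using step(2) by (rule chgs_TF_E)
  obtain cs where cs: "c = VFun cs" "\<forall>j\<in>pos K s. R (g j) (cs j)"
    using step(3) unfolding g(1) map_rel_vfun by blast
  have "w' = vfun K s (\<lambda>j. fst (snd F (g' j) (cs j)))"
    and "c' = vfun K s (\<lambda>j. snd (snd F (g' j) (cs j)))"
    using step(4) by (simp_all add: g'(1) cs(1) snd_map_inc_vfun)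
  then show ?case
    using g(2) g'(2) cs(2) valid_inc_step_sel[OF F]
    by (auto simp: g(1) g'(1) map_vfun map_rel_vfun_vfun
        simp del: vals.simps chgs.simps oplus.simps intro: vfun_cong)
qed

definition case_rel ::
  "(('p, 'b) val \<Rightarrow> ('p, 'b) val) \<Rightarrow> (('p, 'b) val \<Rightarrow> ('p, 'b) val)
   \<Rightarrow> (('p, 'b) val \<Rightarrow> ('p, 'b) val \<Rightarrow> bool) \<Rightarrow> (('p, 'b) val \<Rightarrow> ('p, 'b) val \<Rightarrow> bool)
   \<Rightarrow> ('p, 'b) val \<Rightarrow> ('p, 'b) val \<Rightarrow> bool" where
  "case_rel f g R S v c \<longleftrightarrow>
     (case (v, c) of
        (VInl x, VInl (VPair c y)) \<Rightarrow> R x c \<and> y = f x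
      | (VInr x, VInr (VPair c y)) \<Rightarrow> S x c \<and> y = g x
      | _ \<Rightarrow> False)"

lemma valid_case_inc:
  assumes bcs: "base_change_structure K"
    and F: "valid_inc K A1 B1 f R F" and G: "valid_inc K A2 B2 g S G"
  shows "valid_inc K (TSum A1 A2) (TSum B1 B2)
    (\<lambda>v. case v of VInl x \<Rightarrow> VInl (f x) | VInr x \<Rightarrow> VInr (g x) | _ \<Rightarrow> VUndef)
    (case_rel f g R S) (case_inc K B1 B2 F G)"
proof (rule valid_incI, goal_cases vals init step)
  case (vals v)
  then show ?case using valid_inc_vals[OF F] valid_inc_vals[OF G] by auto
next
  case (init v w c)
  then show ?case using valid_inc_init_sel[OF F] valid_inc_init_sel[OF G]
    by (auto simp: case_inc_def case_rel_def split_def)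
next
  case (step v v' c w' c')
  note unfold = case_inc_def case_d_def case_rel_def split_def Let_def
  note facts = step(4) valid_inc_vals[OF F] valid_inc_vals[OF G]
    valid_inc_init_sel[OF F] valid_inc_init_sel[OF G]
    oplus_closed[OF bcs] ominus_closed[OF bcs] oplus_ominus[OF bcs]
  from step(2) consider (cl) a' where "v' = VCl a'" "a' \<in> chgs K A1"
    | (cr) b' where "v' = VCr b'" "b' \<in> chgs K A2"
    | (sl) a where "v' = VSl a" | (sr) b where "v' = VSr b" | (null) "v' = VNull"
    by auto
  note change_cases = this
  from step(1,3) consider
      (inl) x c0 where "v = VInl x" "x \<in> vals K A1" "c = VInl (VPair c0 (f x))" "R x c0"
    | (inr) x c0 where "v = VInr x" "x \<in> vals K A2" "c = VInr (VPair c0 (g x))" "S x c0"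
    by (auto simp: case_rel_def split: val.splits)
  then show ?case
  proof cases
    case inl
    from change_cases show ?thesis
    proof cases
      case cl
      then show ?thesis
        using step(4) inl valid_inc_step_sel[OF F inl(2) cl(2) inl(4)] by (auto simp: unfold)
    qed (use facts inl step(2) in \<open>auto simp: unfold\<close>)
  next
    case inr
    from change_cases show ?thesis
    proof cases
      case cr
      then show ?thesis
        using step(4) inr valid_inc_step_sel[OF G inr(2) cr(2) inr(4)] by (auto simp: unfold)
    qed (use facts inr step(2) in \<open>auto simp: unfold\<close>)
  qed
qed

lemma valid_unit_inc:
  assumes "\<And>x. x \<in> vals K A \<Longrightarrow> f x \<in> vals K B" and "\<And>x'. x' \<in> chgs K A \<Longrightarrow> f x' \<in> chgs K B"
    and "\<And>x x'. x \<in> vals K A \<Longrightarrow> x' \<in> chgs K A \<Longrightarrow> f (oplus K A x x') = oplus K B (f x) (f x')"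
  shows "valid_inc K A B f (\<lambda>_ _. True) (unit_inc f)"
  using assms by (auto simp: valid_inc_def unit_inc_def)

lemma valid_inc_Id: "valid_inc K A A (den K Id) (\<lambda>_ _. True) (inc K Id)"
  unfolding inc.simps by (rule valid_unit_inc) auto

lemma valid_inc_Dup: "valid_inc K A (TProd A A) (den K Dup) (\<lambda>_ _. True) (inc K Dup)"
  unfolding inc.simps by (rule valid_unit_inc) auto

lemma valid_inc_Fst: "valid_inc K (TProd A B) A (den K Fst) (\<lambda>_ _. True) (inc K Fst)"
  unfolding inc.simps by (rule valid_unit_inc) auto

lemma valid_inc_Snd: "valid_inc K (TProd A B) B (den K Snd) (\<lambda>_ _. True) (inc K Snd)"
  unfolding inc.simps by (rule valid_unit_inc) auto

lemma valid_inc_Zip: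
  "valid_inc K (TProd (TF s A) (TF s B)) (TF s (TProd A B))
    (den K (Zip s)) (\<lambda>_ _. True) (inc K (Zip s))"
  unfolding inc.simps by (rule valid_unit_inc) (auto simp: vfun_def intro!: ext)

lemma valid_inc_Get:
  "i \<in> pos K s \<Longrightarrow> valid_inc K (TF s A) A (den K (Get s i)) (\<lambda>_ _. True) (inc K (Get s i))"
  unfolding inc.simps by (rule valid_unit_inc) (auto simp: vfun_def)

lemma valid_inc_Set:
  "i \<in> pos K s \<Longrightarrow>
    valid_inc K (TProd A (TF s A)) (TF s A) (den K (Set s i)) (\<lambda>_ _. True) (inc K (Set s i))"
  unfolding inc.simps by (rule valid_unit_inc) (auto simp: vfun_def intro!: ext)

lemma valid_inc_Reshape:
  "\<forall>i\<in>pos K s2. r i \<in> pos K s1 \<Longrightarrow>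
    valid_inc K (TF s1 A) (TF s2 A)
      (den K (Reshape s1 s2 r)) (\<lambda>_ _. True) (inc K (Reshape s1 s2 r))"
  unfolding inc.simps by (rule valid_unit_inc) (auto simp: vfun_def intro!: ext)

lemma valid_inc_Replicate:
  "valid_inc K A (TF s A) (den K (Replicate s)) (\<lambda>_ _. True) (inc K (Replicate s))"
  unfolding inc.simps by (rule valid_unit_inc) (auto simp: vfun_def intro!: ext)

lemma valid_inc_Tp:
  "valid_inc K (TF s1 (TF s2 A)) (TF s2 (TF s1 A))
    (den K (Tp s1 s2)) (\<lambda>_ _. True) (inc K (Tp s1 s2))"
  unfolding inc.simps
  by (rule valid_unit_inc;
      auto simp: vfun_def intro!: ext; ((drule (1) bspec)+)?; auto simp: vfun_def)

lemma valid_inc_Filter: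
  "valid_inc K (TProd A (TF s A)) (TF s A) (den K (Filter s p)) (\<lambda>_ _. True) (inc K (Filter s p))"
  unfolding inc.simps by (rule valid_unit_inc) (auto simp: vfun_def intro!: ext)

lemma valid_inc_Inl: "valid_inc K A (TSum A B) (den K Inl) (\<lambda>_ _. True) (inc K Inl)"
  by (auto simp: valid_inc_def)

lemma valid_inc_Inr: "valid_inc K B (TSum A B) (den K Inr) (\<lambda>_ _. True) (inc K Inr)"
  by (auto simp: valid_inc_def)

lemma valid_inc_Cst:
  "base_change_structure K \<Longrightarrow> c \<in> vals K A \<Longrightarrow>
    valid_inc K B A (den K (Cst A c)) (\<lambda>_ _. True) (inc K (Cst A c))"
  by (auto simp: valid_inc_def ominus_closed oplus_ominus)

lemma ac_interchange:
  assumes closed: "\<And>x y. x \<in> S \<Longrightarrow> y \<in> S \<Longrightarrow> f x y \<in> S"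
    and assoc: "\<And>x y z. x \<in> S \<Longrightarrow> y \<in> S \<Longrightarrow> z \<in> S \<Longrightarrow> f (f x y) z = f x (f y z)"
    and comm: "\<And>x y. x \<in> S \<Longrightarrow> y \<in> S \<Longrightarrow> f x y = f y x"
    and "a \<in> S" "b \<in> S" "c \<in> S" "d \<in> S"
  shows "f (f a b) (f c d) = f (f a c) (f b d)"
proof -
  have "f (f a b) (f c d) = f a (f (f b c) d)" using assms by simp
  also have "f b c = f c b" using assms by simp
  also have "f a (f (f c b) d) = f (f a c) (f b d)" using assms by simp
  finally show ?thesis .
qed

lemma valid_inc_Plus:
  assumes bcs: "base_change_structure K" and chgs: "vals K A = chgs K A"
    and assoc: "\<forall>x\<in>vals K A. \<forall>y\<in>vals K A. \<forall>z\<in>vals K A.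
      oplus K A (oplus K A x y) z = oplus K A x (oplus K A y z)"
    and comm: "\<forall>x\<in>vals K A. \<forall>y\<in>vals K A. oplus K A x y = oplus K A y x"
  shows "valid_inc K (TProd A A) A (den K (Plus A)) (\<lambda>_ _. True) (inc K (Plus A))"
proof -
  have closed: "\<And>x y. x \<in> vals K A \<Longrightarrow> y \<in> vals K A \<Longrightarrow> oplus K A x y \<in> vals K A"
    using oplus_closed[OF bcs] chgs by auto
  show ?thesis
    using closed ac_interchange[of "vals K A" "oplus K A", OF closed] assoc comm chgs
    by (auto simp: valid_inc_def)
qed

lemma valid_inc_consistent_inc:
  "consistent_inc K A B f C i d \<Longrightarrow> valid_inc K A B f (\<lambda>x c. c = snd (i x)) (i, d)"
  by (auto simp: valid_inc_def consistent_inc_def) (metis fst_conv)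

lemma valid_inc_Fuse:
  "base_change_structure K \<Longrightarrow>
    valid_inc K (TSum A A) A (den K (Fuse A)) (\<lambda>x c. c = x) (inc K (Fuse A))"
  by (auto simp: valid_inc_def fuse_inc_def fuse_d_def oplus_closed ominus_closed oplus_ominus)

lemma valid_inc_Distr:
  "base_change_structure K \<Longrightarrow>
    valid_inc K (TProd A (TSum B C)) (TSum (TProd A B) (TProd A C)) (den K (Distr A B C))
      (\<lambda>x c. c = x) (inc K (Distr A B C))"
  by (auto simp: valid_inc_def distr_inc_def distr_d_def oplus_closed ominus_closed oplus_ominus)

fun cache_rel :: "('s, 'p, 'b) cstr \<Rightarrow> ('s, 'p, 'b) expr \<Rightarrow> ('p, 'b) val \<Rightarrow> ('p, 'b) val \<Rightarrow> bool"
  where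
  "cache_rel K (Comp e1 e2) = comp_rel (den K e1) (cache_rel K e1) (cache_rel K e2)"
| "cache_rel K (Par e1 e2) = par_rel (cache_rel K e1) (cache_rel K e2)"
| "cache_rel K (Op A B f C i d) = (\<lambda>x c. c = snd (i x))"
| "cache_rel K (Map s e) = map_rel K s (cache_rel K e)"
| "cache_rel K (Fuse A) = (\<lambda>x c. c = x)"
| "cache_rel K (Distr A B C) = (\<lambda>x c. c = x)"
| "cache_rel K (Case B1 B2 e1 e2) =
     case_rel (den K e1) (den K e2) (cache_rel K e1) (cache_rel K e2)"
| "cache_rel K _ = (\<lambda>_ _. True)"

lemma hastype_valid_inc:
  "hastype K e A B \<Longrightarrow> base_change_structure K \<Longrightarrow> plus_ac K e \<Longrightarrow>
    valid_inc K A B (den K e) (cache_rel K e) (inc K e)"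
proof (induction rule: hastype.induct)
  case (1 K e1 A B e2 C)
  then show ?case
    using valid_comp_inc[of K A B "den K e1" "cache_rel K e1" "inc K e1" C "den K e2"] by simp
next
  case (2 K e1 A B e2 C D)
  then show ?case
    using valid_par_inc[of K A B "den K e1" "cache_rel K e1" "inc K e1" C D "den K e2"] by simp
next
  case (9 K A B f C i d)
  then show ?case using valid_inc_consistent_inc by simp
next
  case (10 K e A B s)
  then show ?case using valid_map_inc[of K A B "den K e" "cache_rel K e" "inc K e" s] by simp
next
  case (22 K e1 A1 B1 e2 A2 B2)
  then show ?case
    using valid_case_inc[of K A1 B1 "den K e1" "cache_rel K e1" "inc K e1" A2 B2 "den K e2"] by simp
qed (simp_all only: cache_rel.simps plus_ac.simps,
    (blast intro: valid_inc_Id valid_inc_Dup valid_inc_Fst valid_inc_Snd valid_inc_Cst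
      valid_inc_Plus valid_inc_Zip valid_inc_Get valid_inc_Set valid_inc_Reshape
      valid_inc_Replicate valid_inc_Tp valid_inc_Filter valid_inc_Inl valid_inc_Inr
      valid_inc_Fuse valid_inc_Distr)+)

theorem theorem5p6:
  fixes K :: "('s, 'p, 'b) cstr" and e :: "('s, 'p, 'b) expr" and A B :: "'s ty"
  assumes "base_change_structure K"
    and "hastype K e A B"
    and "plus_ac K e"
    and "x \<in> vals K A"
    and "set xs' \<subseteq> chgs K A"
  shows "fst (iter K B (inc K e) x xs') = den K e (sum_chg K A x xs')"
  using iter_valid_inc[OF assms(1) hastype_valid_inc[OF assms(2,1,3)] assms(4,5)] .

end
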